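(* Let $H$ be a complex Hilbert space, $\varphi,\psi:[0,1]\to\mathbb{R}$ continuous, $A\in\mathbb{B}(H)$ and $t\in[0,1]$. Then $$\frac14\big(\min\{|\varphi(t)+\psi(t)|,|\varphi(t)-\psi(t)|\}\big)^2\|A^*A+AA^*\|\le\omega_t^2(\varphi,\psi;A)\le\frac12\big(\max\{|\varphi(t)+\psi(t)|,|\varphi(t)-\psi(t)|\}\big)^2\|A^*A+AA^*\|.$$
   Context: $S_1(H)$ is the unit sphere of $H$ and $\omega_t(\varphi,\psi;A)=\sup_{x\in S_1(H)}|\langle(\varphi(t)A+\psi(t)A^* )x,x\rangle|$. *)

theory Defs
  imports "HOL-Analysis.Analysis"
begin

text \<open>A complex Hilbert space is modelled as an abelian group 'h together with a
complex scalar multiplication sc and a complex inner product ip (linear in the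
first argument, conjugate-linear in the second), complete w.r.t. the induced norm.\<close>

definition cnorm :: "('h \<Rightarrow> 'h \<Rightarrow> complex) \<Rightarrow> 'h \<Rightarrow> real" where
  "cnorm ip x = sqrt (Re (ip x x))"

definition complex_hilbert_space ::
  "(complex \<Rightarrow> 'h::ab_group_add \<Rightarrow> 'h) \<Rightarrow> ('h \<Rightarrow> 'h \<Rightarrow> complex) \<Rightarrow> bool" where
  "complex_hilbert_space sc ip \<longleftrightarrow>
     (\<forall>a x y. sc a (x + y) = sc a x + sc a y) \<and>
     (\<forall>a b x. sc (a + b) x = sc a x + sc b x) \<and>
     (\<forall>a b x. sc a (sc b x) = sc (a * b) x) \<and>
     (\<forall>x. sc 1 x = x) \<and>
     (\<forall>x y z. ip (x + y) z = ip x z + ip y z) \<and>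
     (\<forall>a x y. ip (sc a x) y = a * ip x y) \<and>
     (\<forall>x y. ip y x = cnj (ip x y)) \<and>
     (\<forall>x. 0 \<le> Re (ip x x)) \<and>
     (\<forall>x. ip x x = 0 \<longrightarrow> x = 0) \<and>
     (\<forall>X :: nat \<Rightarrow> 'h. (\<forall>e>0. \<exists>N. \<forall>m\<ge>N. \<forall>n\<ge>N. cnorm ip (X m - X n) < e)
        \<longrightarrow> (\<exists>L. (\<lambda>n. cnorm ip (X n - L)) \<longlonglongrightarrow> 0))"

definition bounded_op ::
  "(complex \<Rightarrow> 'h::ab_group_add \<Rightarrow> 'h) \<Rightarrow> ('h \<Rightarrow> 'h \<Rightarrow> complex) \<Rightarrow> ('h \<Rightarrow> 'h) \<Rightarrow> bool" where
  "bounded_op sc ip A \<longleftrightarrow>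
     (\<forall>x y. A (x + y) = A x + A y) \<and> (\<forall>c x. A (sc c x) = sc c (A x)) \<and>
     (\<exists>K. \<forall>x. cnorm ip (A x) \<le> K * cnorm ip x)"

definition adjoint :: "('h \<Rightarrow> 'h \<Rightarrow> complex) \<Rightarrow> ('h \<Rightarrow> 'h) \<Rightarrow> ('h \<Rightarrow> 'h)" where
  "adjoint ip A = (THE B. \<forall>x y. ip (A x) y = ip x (B y))"

definition op_norm :: "('h \<Rightarrow> 'h \<Rightarrow> complex) \<Rightarrow> ('h \<Rightarrow> 'h) \<Rightarrow> real" where
  "op_norm ip T = Sup {cnorm ip (T x) | x. cnorm ip x \<le> 1}"

text \<open>The value 0 is inserted only so that the supremum is well defined for H = {0};
  for H nontrivial it does not change the supremum (all values are nonnegative).\<close>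
definition omega_t ::
  "(complex \<Rightarrow> 'h::ab_group_add \<Rightarrow> 'h) \<Rightarrow> ('h \<Rightarrow> 'h \<Rightarrow> complex) \<Rightarrow> (real \<Rightarrow> real) \<Rightarrow> (real \<Rightarrow> real)
    \<Rightarrow> ('h \<Rightarrow> 'h) \<Rightarrow> real \<Rightarrow> real" where
  "omega_t sc ip \<phi> \<psi> A t = Sup (insert 0
     {cmod (ip (sc (complex_of_real (\<phi> t)) (A x) + sc (complex_of_real (\<psi> t)) (adjoint ip A x)) x)
      | x. cnorm ip x = 1})"

end

theory Submission
  imports Defs
begin

text \<open>
Write a = phi t, b = psi t and omega(A) for the numerical radius of A.  Since
|<(aA + bA^* )x, x>|^2 = (a + b)^2 (Re <Ax, x>)^2 + (a - b)^2 (Im <Ax, x>)^2, the quantity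
omega_t lies between min(|a + b|, |a - b|) omega(A) and max(|a + b|, |a - b|) omega(A), so it
suffices to prove Kittaneh's inequalities
  (1/4) ||A^*A + AA^*|| <= omega(A)^2 <= (1/2) ||A^*A + AA^*||.
Polarization bounds P = A + A^* and Q = A - A^* by 2 omega(A), and 2 (A^*A + AA^*) = P^2 - Q^2
gives the first one; the second follows from
  4 |<Ax, x>|^2 = |<Px, x>|^2 + |<Qx, x>|^2 <= ||Px||^2 + ||Qx||^2 = 2 <(A^*A + AA^* )x, x>.
As H is given only through its axioms, the adjoint has to be shown to exist: by a Riesz
representation theorem, proved by letting Re f attain its supremum F on the unit ball at some L
(the parallelogram law makes maximizing sequences Cauchy) and checking f = <_, F L> by a
first-variation argument at L.\<close>

lemma linear_coeff_eq_0_if_nonneg_near_0: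
  fixes a b \<delta> :: real
  assumes "0 < \<delta>" and "\<And>s. \<bar>s\<bar> < \<delta> \<Longrightarrow> 0 \<le> a * s + b * s\<^sup>2"
  shows "a = 0"
proof (rule DERIV_local_min)
  show "((\<lambda>s. a * s + b * s\<^sup>2) has_real_derivative a) (at 0)"
    by (auto intro!: derivative_eq_intros)
qed (use assms in auto)

lemma cmod_combination_cnj_bounds:
  fixes a b :: real and w :: complex
  shows "min \<bar>a + b\<bar> \<bar>a - b\<bar> * cmod w \<le> cmod (of_real a * w + of_real b * cnj w)"
    and "cmod (of_real a * w + of_real b * cnj w) \<le> max \<bar>a + b\<bar> \<bar>a - b\<bar> * cmod w"
proof -
  have sq: "(cmod (of_real a * w + of_real b * cnj w))\<^sup>2 = (a + b)\<^sup>2 * (Re w)\<^sup>2 + (a - b)\<^sup>2 * (Im w)\<^sup>2"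
    unfolding cmod_power2 by (simp add: power2_eq_square algebra_simps)
  let ?m = "min \<bar>a + b\<bar> \<bar>a - b\<bar>" and ?M = "max \<bar>a + b\<bar> \<bar>a - b\<bar>"
  have "?m\<^sup>2 \<le> (a + b)\<^sup>2" "?m\<^sup>2 \<le> (a - b)\<^sup>2" "(a + b)\<^sup>2 \<le> ?M\<^sup>2" "(a - b)\<^sup>2 \<le> ?M\<^sup>2"
    by (simp_all add: abs_le_square_iff[symmetric])
  then have lower: "(?m * cmod w)\<^sup>2 \<le> (cmod (of_real a * w + of_real b * cnj w))\<^sup>2"
    and upper: "(cmod (of_real a * w + of_real b * cnj w))\<^sup>2 \<le> (?M * cmod w)\<^sup>2"
    unfolding sq unfolding power_mult_distrib cmod_power2 distrib_left
    using mult_right_mono[OF _ zero_le_power2[of "Re w"]] mult_right_mono[OF _ zero_le_power2[of "Im w"]]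
    by (meson add_mono)+
  show "?m * cmod w \<le> cmod (of_real a * w + of_real b * cnj w)"
    and "cmod (of_real a * w + of_real b * cnj w) \<le> ?M * cmod w"
    using power2_le_imp_le[OF lower] power2_le_imp_le[OF upper] by simp_all
qed

section \<open>Complex Hilbert spaces\<close>

locale complex_hilbert =
  fixes sc :: "complex \<Rightarrow> 'h::ab_group_add \<Rightarrow> 'h" and ip :: "'h \<Rightarrow> 'h \<Rightarrow> complex"
  assumes sc_add_right: "sc a (x + y) = sc a x + sc a y"
    and sc_add_left: "sc (a + b) x = sc a x + sc b x"
    and sc_sc: "sc a (sc b x) = sc (a * b) x"
    and sc_one [simp]: "sc 1 x = x"
    and ip_add_left: "ip (x + y) z = ip x z + ip y z"
    and ip_sc_left: "ip (sc a x) y = a * ip x y"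
    and ip_cnj: "\<And>x y. ip y x = cnj (ip x y)"
      \<comment> \<open>explicit binders make the locale predicate coincide with complex_hilbert_space\<close>
    and Re_ip_self_nonneg: "0 \<le> Re (ip x x)"
    and ip_self_eq_0D: "ip x x = 0 \<Longrightarrow> x = 0"
    and Cauchy_convergent: "\<forall>e>0. \<exists>N. \<forall>m\<ge>N. \<forall>n\<ge>N. cnorm ip (X m - X n) < e
      \<Longrightarrow> \<exists>L. (\<lambda>n. cnorm ip (X n - L)) \<longlonglongrightarrow> 0"

lemma complex_hilbertI: "complex_hilbert_space sc ip \<Longrightarrow> complex_hilbert sc ip"
  unfolding complex_hilbert_space_def complex_hilbert_def conj_assoc .

context complex_hilbert
begin

abbreviation hnorm :: "'h \<Rightarrow> real" where "hnorm \<equiv> cnorm ip"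

lemma sc_zero_left [simp]: "sc 0 x = 0"
  using sc_add_left[of 0 0 x] by simp

lemma sc_zero_right [simp]: "sc a 0 = 0"
  using sc_add_right[of a 0 0] by simp

lemma sc_minus_one: "sc (-1) x = - x"
  using sc_add_left[of 1 "-1" x] by (simp add: eq_neg_iff_add_eq_0 add.commute)

lemma sc_two: "sc 2 x = x + x"
  using sc_add_left[of 1 1 x] by simp

lemma ip_zero_left [simp]: "ip 0 y = 0"
  using ip_add_left[of 0 0 y] by simp

lemma ip_minus_left: "ip (- x) y = - ip x y"
  using ip_add_left[of x "- x" y] by (simp add: eq_neg_iff_add_eq_0 add.commute)

lemma ip_diff_left: "ip (x - y) z = ip x z - ip y z"
  using ip_add_left[of x "- y" z] by (simp add: ip_minus_left)

lemma ip_add_right: "ip x (y + z) = ip x y + ip x z"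
  by (metis ip_cnj ip_add_left complex_cnj_add)

lemma ip_diff_right: "ip x (y - z) = ip x y - ip x z"
  by (metis ip_cnj ip_diff_left complex_cnj_diff)

lemma ip_sc_right: "ip x (sc a y) = cnj a * ip x y"
  by (metis ip_cnj ip_sc_left complex_cnj_mult)

lemma ip_zero_right [simp]: "ip x 0 = 0"
  by (metis ip_cnj ip_zero_left complex_cnj_zero)

lemmas ip_linear = ip_add_left ip_add_right ip_diff_left ip_diff_right ip_sc_left ip_sc_right

lemma ip_eqI: "(\<And>z. ip z x = ip z y) \<Longrightarrow> x = y"
  using ip_self_eq_0D[of "x - y"] by (metis ip_diff_right eq_iff_diff_eq_0)

lemma hnorm_nonneg [simp]: "0 \<le> hnorm x"
  using Re_ip_self_nonneg[of x] by (simp add: cnorm_def)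

lemma hnorm_sq: "(hnorm x)\<^sup>2 = Re (ip x x)"
  using Re_ip_self_nonneg[of x] by (simp add: cnorm_def)

lemma ip_self: "ip x x = complex_of_real ((hnorm x)\<^sup>2)"
proof -
  have "Im (ip x x) = 0"
    using arg_cong[OF ip_cnj[of x x], of Im] by simp
  then show ?thesis
    by (simp add: hnorm_sq complex_eq_iff)
qed

lemma Re_ip_commute: "Re (ip y x) = Re (ip x y)"
  using arg_cong[OF ip_cnj[of y x], of Re] by simp

lemma hnorm_eq_0_iff [simp]: "hnorm x = 0 \<longleftrightarrow> x = 0"
  using ip_self[of x] ip_self_eq_0D[of x] by (auto simp: cnorm_def)

lemma hnorm_zero [simp]: "hnorm 0 = 0"
  by simp

lemma hnorm_pos: "x \<noteq> 0 \<Longrightarrow> 0 < hnorm x"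
  using hnorm_nonneg[of x] by (simp add: less_le)

lemma hnorm_sc: "hnorm (sc a x) = cmod a * hnorm x"
proof (rule power2_eq_imp_eq)
  have "(hnorm (sc a x))\<^sup>2 = Re ((a * cnj a) * ip x x)"
    by (simp only: hnorm_sq ip_sc_left ip_sc_right mult_ac)
  also have "\<dots> = (cmod a * hnorm x)\<^sup>2"
    by (simp add: complex_norm_square[symmetric] hnorm_sq power_mult_distrib)
  finally show "(hnorm (sc a x))\<^sup>2 = (cmod a * hnorm x)\<^sup>2" .
qed (simp_all add: hnorm_nonneg)

lemma hnorm_minus: "hnorm (- x) = hnorm x"
  using hnorm_sc[of "-1" x] by (simp add: sc_minus_one)

lemma hnorm_minus_commute: "hnorm (x - y) = hnorm (y - x)"
  by (metis minus_diff_eq hnorm_minus)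

lemma hnorm_normalize:
  assumes "x \<noteq> 0"
  shows "hnorm (sc (complex_of_real (1 / hnorm x)) x) = 1"
  using assms hnorm_pos[OF assms] by (simp add: hnorm_sc norm_divide)

lemma hnorm_add_sq: "(hnorm (x + y))\<^sup>2 = (hnorm x)\<^sup>2 + 2 * Re (ip x y) + (hnorm y)\<^sup>2"
  using Re_ip_commute[of y x] by (simp add: hnorm_sq ip_linear)

lemma hnorm_diff_sq: "(hnorm (x - y))\<^sup>2 = (hnorm x)\<^sup>2 - 2 * Re (ip x y) + (hnorm y)\<^sup>2"
  using Re_ip_commute[of y x] by (simp add: hnorm_sq ip_linear)

lemma parallelogram:
  "(hnorm (x + y))\<^sup>2 + (hnorm (x - y))\<^sup>2 = 2 * (hnorm x)\<^sup>2 + 2 * (hnorm y)\<^sup>2"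
  by (simp add: hnorm_add_sq hnorm_diff_sq)

lemma Cauchy_Schwarz: "cmod (ip x y) \<le> hnorm x * hnorm y"
proof (cases "y = 0")
  case False
  define c where "c = ip x y"
  define n where "n = (hnorm y)\<^sup>2"
  define t where "t = c / complex_of_real n"
  have "0 < n"
    using False by (simp add: n_def)
  have cc: "c * cnj c = complex_of_real ((cmod c)\<^sup>2)"
    by (rule complex_norm_square[symmetric])
  have "ip y x = cnj c"
    unfolding c_def by (rule ip_cnj)
  then have expand: "ip (x - sc t y) (x - sc t y)
      = ip x x - cnj t * c - t * cnj c + t * cnj t * complex_of_real n"
    by (simp add: ip_linear c_def[symmetric] ip_self[of y] n_def algebra_simps)
  have "cnj t * c = complex_of_real ((cmod c)\<^sup>2 / n)"
    and "t * cnj c = complex_of_real ((cmod c)\<^sup>2 / n)"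
    and "t * cnj t * complex_of_real n = complex_of_real ((cmod c)\<^sup>2 / n)"
    using \<open>0 < n\<close> cc by (simp_all add: t_def field_simps)
  then have "Re (ip (x - sc t y) (x - sc t y)) = (hnorm x)\<^sup>2 - (cmod c)\<^sup>2 / n"
    unfolding expand by (simp add: hnorm_sq)
  then have "(cmod c)\<^sup>2 / n \<le> (hnorm x)\<^sup>2"
    using Re_ip_self_nonneg[of "x - sc t y"] by simp
  then have "(cmod c)\<^sup>2 \<le> (hnorm x * hnorm y)\<^sup>2"
    using \<open>0 < n\<close> by (simp add: n_def divide_le_eq power_mult_distrib)
  then show ?thesis
    unfolding c_def by (rule power2_le_imp_le) (simp add: hnorm_nonneg)
qed simp

lemma hnorm_triangle: "hnorm (x + y) \<le> hnorm x + hnorm y"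
proof (rule power2_le_imp_le)
  have "Re (ip x y) \<le> hnorm x * hnorm y"
    using Cauchy_Schwarz[of x y] complex_Re_le_cmod order_trans by blast
  then show "(hnorm (x + y))\<^sup>2 \<le> (hnorm x + hnorm y)\<^sup>2"
    by (simp add: hnorm_add_sq power2_sum)
qed (simp add: hnorm_nonneg)

lemma hnorm_triangle_diff: "hnorm (x - y) \<le> hnorm x + hnorm y"
  using hnorm_triangle[of x "- y"] by (simp add: hnorm_minus)

lemma hnorm_add_scaled_sq:
  "(hnorm (x + sc (complex_of_real s) y))\<^sup>2
     = (hnorm x)\<^sup>2 + 2 * s * Re (ip y x) + s\<^sup>2 * (hnorm y)\<^sup>2"
  by (simp add: hnorm_add_sq hnorm_sc Re_ip_commute[of x] ip_sc_left power_mult_distrib)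

section \<open>Riesz representation and the adjoint\<close>

lemma hnorm_diff_sq_le_if_hnorm_add_ge:
  assumes "hnorm u \<le> 1" "hnorm v \<le> 1" and "2 - \<delta> \<le> hnorm (u + v)" and "0 \<le> \<delta>"
  shows "(hnorm (u - v))\<^sup>2 \<le> 4 * \<delta>"
proof -
  have "(hnorm u)\<^sup>2 \<le> 1" "(hnorm v)\<^sup>2 \<le> 1"
    using assms(1,2) hnorm_nonneg by (simp_all add: power_le_one)
  then have diff: "(hnorm (u - v))\<^sup>2 \<le> 4 - (hnorm (u + v))\<^sup>2"
    using parallelogram[of u v] by linarith
  show ?thesis
  proof (cases "\<delta> \<le> 2")
    case True
    then have "(2 - \<delta>)\<^sup>2 \<le> (hnorm (u + v))\<^sup>2"
      using assms(3) by (intro power_mono) auto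
    moreover have "(2 - \<delta>)\<^sup>2 = 4 - 4 * \<delta> + \<delta>\<^sup>2"
      by (simp add: power2_eq_square algebra_simps)
    ultimately show ?thesis
      using diff zero_le_power2[of \<delta>] by linarith
  next
    case False
    then show ?thesis
      using diff zero_le_power2[of "hnorm (u + v)"] by linarith
  qed
qed

lemma maximizing_sequence_Cauchy:
  fixes f :: "'h \<Rightarrow> complex"
  assumes add: "\<And>x y. f (x + y) = f x + f y"
    and "0 < F" and le_F: "\<And>x. Re (f x) \<le> F * hnorm x"
    and X_le: "\<And>n. hnorm (X n) \<le> 1" and X_approx: "\<And>n. F - e n < Re (f (X n))"
    and e_lim: "e \<longlonglongrightarrow> 0"
  shows "\<forall>\<epsilon>>0. \<exists>N. \<forall>m\<ge>N. \<forall>n\<ge>N. hnorm (X m - X n) < \<epsilon>"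
proof (intro allI impI)
  fix \<epsilon> :: real
  assume "0 < \<epsilon>"
  have e_pos: "0 < e n" for n
    using X_approx[of n] order_trans[OF le_F mult_left_le[OF X_le[of n]]] \<open>0 < F\<close> by simp
  have dist_X: "(hnorm (X m - X n))\<^sup>2 \<le> 4 * ((e m + e n) / F)" for m n
  proof (rule hnorm_diff_sq_le_if_hnorm_add_ge[OF X_le X_le])
    have "F * (2 - (e m + e n) / F) = (F - e m) + (F - e n)"
      using \<open>0 < F\<close> by (simp add: field_simps)
    also have "\<dots> < Re (f (X m + X n))"
      using X_approx[of m] X_approx[of n] by (simp add: add)
    also have "\<dots> \<le> F * hnorm (X m + X n)"
      by (rule le_F)
    finally show "2 - (e m + e n) / F \<le> hnorm (X m + X n)"
      using \<open>0 < F\<close> by simp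
    show "0 \<le> (e m + e n) / F"
      using e_pos[of m] e_pos[of n] \<open>0 < F\<close> by simp
  qed
  obtain N where N: "\<And>n. N \<le> n \<Longrightarrow> e n < F * \<epsilon>\<^sup>2 / 8"
    using order_tendstoD(2)[OF e_lim, of "F * \<epsilon>\<^sup>2 / 8"] \<open>0 < F\<close> \<open>0 < \<epsilon>\<close>
    unfolding eventually_sequentially by auto
  show "\<exists>N. \<forall>m\<ge>N. \<forall>n\<ge>N. hnorm (X m - X n) < \<epsilon>"
  proof (intro exI allI impI)
    fix m n
    assume "N \<le> m" "N \<le> n"
    then have "4 * ((e m + e n) / F) < \<epsilon>\<^sup>2"
      using N[of m] N[of n] \<open>0 < F\<close> by (simp add: field_simps)
    then have "(hnorm (X m - X n))\<^sup>2 < \<epsilon>\<^sup>2"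
      using dist_X[of m n] by linarith
    then show "hnorm (X m - X n) < \<epsilon>"
      using \<open>0 < \<epsilon>\<close> by (simp add: power_less_imp_less_base)
  qed
qed

lemma bounded_functional_attains_sup:
  fixes f :: "'h \<Rightarrow> complex"
  assumes add: "\<And>x y. f (x + y) = f x + f y"
    and bounded: "\<And>x. cmod (f x) \<le> K * hnorm x"
    and "0 < F"
    and le_F: "\<And>x. Re (f x) \<le> F * hnorm x"
    and approx: "\<And>e. 0 < e \<Longrightarrow> \<exists>x. hnorm x \<le> 1 \<and> F - e < Re (f x)"
  shows "\<exists>L. hnorm L = 1 \<and> Re (f L) = F"
proof -
  define e :: "nat \<Rightarrow> real" where "e n = inverse (real (Suc n))" for n
  have e_lim: "e \<longlonglongrightarrow> 0"
    unfolding e_def by (rule LIMSEQ_inverse_real_of_nat)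
  have "\<forall>n. \<exists>x. hnorm x \<le> 1 \<and> F - e n < Re (f x)"
    using approx by (simp add: e_def)
  then obtain X where X_le: "\<And>n. hnorm (X n) \<le> 1" and X_approx: "\<And>n. F - e n < Re (f (X n))"
    by metis
  obtain L where lim: "(\<lambda>n. hnorm (X n - L)) \<longlonglongrightarrow> 0"
    using Cauchy_convergent maximizing_sequence_Cauchy[OF add \<open>0 < F\<close> le_F X_le X_approx e_lim]
    by blast
  have "hnorm L \<le> 1"
  proof (rule LIMSEQ_le_const)
    show "(\<lambda>n. 1 + hnorm (X n - L)) \<longlonglongrightarrow> 1"
      using tendsto_add[OF tendsto_const lim, of 1] by simp
    have "hnorm L \<le> 1 + hnorm (X n - L)" for n
      using hnorm_triangle[of "X n" "L - X n"] X_le[of n] hnorm_minus_commute[of L "X n"] by simp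
    then show "\<exists>N. \<forall>n\<ge>N. hnorm L \<le> 1 + hnorm (X n - L)"
      by blast
  qed
  have "F \<le> Re (f L)"
  proof (rule LIMSEQ_le_const2)
    show "(\<lambda>n. F - e n - K * hnorm (X n - L)) \<longlonglongrightarrow> F"
      using tendsto_diff[OF tendsto_diff[OF tendsto_const e_lim] tendsto_mult[OF tendsto_const lim],
          of F K] by simp
    have "F - e n - K * hnorm (X n - L) \<le> Re (f L)" for n
    proof -
      have "cmod (f (L - X n)) \<le> K * hnorm (X n - L)"
        using bounded[of "L - X n"] by (simp add: hnorm_minus_commute[of L])
      then have "- Re (f (L - X n)) \<le> K * hnorm (X n - L)"
        using abs_Re_le_cmod[of "f (L - X n)"] by linarith
      then show ?thesis
        using X_approx[of n] add[of "X n" "L - X n"] by simp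
    qed
    then show "\<exists>N. \<forall>n\<ge>N. F - e n - K * hnorm (X n - L) \<le> Re (f L)"
      by blast
  qed
  moreover have "Re (f L) \<le> F"
    using order_trans[OF le_F mult_left_le[OF \<open>hnorm L \<le> 1\<close>]] \<open>0 < F\<close> by simp
  ultimately have "Re (f L) = F" and "hnorm L = 1"
    using le_F[of L] \<open>hnorm L \<le> 1\<close> \<open>0 < F\<close> by auto
  then show ?thesis
    by blast
qed

lemma functional_Re_at_maximizer:
  fixes f :: "'h \<Rightarrow> complex"
  assumes add: "\<And>x y. f (x + y) = f x + f y" and scale: "\<And>c x. f (sc c x) = c * f x"
    and "0 < F" and le_F: "\<And>x. Re (f x) \<le> F * hnorm x"
    and "hnorm L = 1" and "Re (f L) = F"
  shows "Re (f y) = F * Re (ip y L)"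
proof -
  define u where "u = Re (f y) / F"
  have "2 * (Re (ip y L) - u) = 0"
  proof (rule linear_coeff_eq_0_if_nonneg_near_0)
    show "0 < 1 / (\<bar>u\<bar> + 1)"
      by simp
    fix s :: real
    assume "\<bar>s\<bar> < 1 / (\<bar>u\<bar> + 1)"
    then have "\<bar>s\<bar> * \<bar>u\<bar> + \<bar>s\<bar> < 1"
      by (simp add: pos_less_divide_eq distrib_left)
    then have "\<bar>s\<bar> * \<bar>u\<bar> < 1"
      by linarith
    then have pos: "0 < 1 + s * u"
      using abs_ge_minus_self[of "s * u"] by (simp add: abs_mult)
    define v where "v = L + sc (complex_of_real s) y"
    have "F * (1 + s * u) = Re (f v)"
      using \<open>0 < F\<close> \<open>Re (f L) = F\<close> by (simp add: v_def add scale u_def field_simps)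
    also have "\<dots> \<le> F * hnorm v"
      by (rule le_F)
    finally have "(1 + s * u)\<^sup>2 \<le> (hnorm v)\<^sup>2"
      using \<open>0 < F\<close> pos by (intro power_mono) auto
    also have "\<dots> = 1 + 2 * s * Re (ip y L) + s\<^sup>2 * (hnorm y)\<^sup>2"
      by (simp add: v_def hnorm_add_scaled_sq \<open>hnorm L = 1\<close>)
    finally show "0 \<le> 2 * (Re (ip y L) - u) * s + ((hnorm y)\<^sup>2 - u\<^sup>2) * s\<^sup>2"
      by (simp add: power2_eq_square algebra_simps)
  qed
  then show ?thesis
    using \<open>0 < F\<close> by (simp add: u_def field_simps)
qed

lemma sup_Re_functional_unit_ball:
  fixes f :: "'h \<Rightarrow> complex"
  assumes scale: "\<And>c x. f (sc c x) = c * f x"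
    and bounded: "\<And>x. cmod (f x) \<le> K * hnorm x" and "f x0 \<noteq> 0"
  obtains F where "0 < F"
    and "\<And>x. Re (f x) \<le> F * hnorm x"
    and "\<And>e. 0 < e \<Longrightarrow> \<exists>x. hnorm x \<le> 1 \<and> F - e < Re (f x)"
proof -
  define R where "R = {Re (f x) | x. hnorm x \<le> 1}"
  define F where "F = Sup R"
  have f_0: "f 0 = 0"
    using scale[of 0 0] by simp
  have "bdd_above R"
  proof (rule bdd_aboveI)
    fix r
    assume "r \<in> R"
    then obtain x where "r = Re (f x)" "hnorm x \<le> 1"
      unfolding R_def by blast
    have "K * hnorm x \<le> \<bar>K\<bar> * hnorm x"
      by (rule mult_right_mono) (simp_all add: hnorm_nonneg)
    also have "\<dots> \<le> \<bar>K\<bar>"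
      by (rule mult_left_le) (simp_all add: \<open>hnorm x \<le> 1\<close>)
    finally show "r \<le> \<bar>K\<bar>"
      using bounded[of x] complex_Re_le_cmod[of "f x"] \<open>r = Re (f x)\<close> by linarith
  qed
  have le_F_ball: "Re (f x) \<le> F" if "hnorm x \<le> 1" for x
    unfolding F_def using \<open>bdd_above R\<close> that by (intro cSup_upper) (auto simp: R_def)
  have le_F: "Re (f x) \<le> F * hnorm x" for x
  proof (cases "x = 0")
    case False
    have "Re (f x) / hnorm x \<le> F"
      using le_F_ball[OF hnorm_normalize[OF False, THEN eq_refl]] by (simp add: scale)
    then show ?thesis
      using hnorm_pos[OF False] by (simp add: divide_le_eq mult.commute)
  qed (simp add: f_0)
  have approx: "\<exists>x. hnorm x \<le> 1 \<and> F - e < Re (f x)" if "0 < e" for e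
  proof -
    have "R \<noteq> {}"
      unfolding R_def by (auto intro!: exI[of _ 0])
    then obtain r where "r \<in> R" "F - e < r"
      using less_cSup_iff[OF _ \<open>bdd_above R\<close>, of "F - e"] \<open>0 < e\<close> by (auto simp: F_def)
    then show ?thesis
      unfolding R_def by blast
  qed
  have "f (sc (cnj (f x0)) x0) = complex_of_real ((cmod (f x0))\<^sup>2)"
    by (simp only: scale complex_norm_square mult.commute)
  moreover have "0 < (cmod (f x0))\<^sup>2"
    using \<open>f x0 \<noteq> 0\<close> by simp
  ultimately have "0 < F * hnorm (sc (cnj (f x0)) x0)"
    using le_F[of "sc (cnj (f x0)) x0"] by (metis Re_complex_of_real order_less_le_trans)
  moreover have "0 \<le> F"
    using le_F_ball[of 0] by (simp add: f_0)
  ultimately have "0 < F"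
    using hnorm_nonneg by (simp add: zero_less_mult_iff)
  then show ?thesis
    using le_F approx by (rule that)
qed

lemma Riesz_representation:
  fixes f :: "'h \<Rightarrow> complex"
  assumes add: "\<And>x y. f (x + y) = f x + f y" and scale: "\<And>c x. f (sc c x) = c * f x"
    and bounded: "\<And>x. cmod (f x) \<le> K * hnorm x"
  shows "\<exists>z. \<forall>x. f x = ip x z"
proof (cases "\<forall>x. f x = 0")
  case True
  then show ?thesis
    by (intro exI[of _ 0]) simp
next
  case False
  then obtain x0 where "f x0 \<noteq> 0"
    by blast
  obtain F where "0 < F" and le_F: "\<And>x. Re (f x) \<le> F * hnorm x"
    and approx: "\<And>e. 0 < e \<Longrightarrow> \<exists>x. hnorm x \<le> 1 \<and> F - e < Re (f x)"
    using sup_Re_functional_unit_ball[OF scale bounded \<open>f x0 \<noteq> 0\<close>] by blast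
  obtain L where "hnorm L = 1" "Re (f L) = F"
    using bounded_functional_attains_sup[OF add bounded \<open>0 < F\<close> le_F approx] by blast
  note Re_f = functional_Re_at_maximizer[OF add scale \<open>0 < F\<close> le_F this]
  have "f y = ip y (sc (complex_of_real F) L)" for y
  proof (rule complex_eqI)
    show "Re (f y) = Re (ip y (sc (complex_of_real F) L))"
      by (simp add: Re_f ip_sc_right)
    show "Im (f y) = Im (ip y (sc (complex_of_real F) L))"
      using Re_f[of "sc \<i> y"] by (simp add: scale ip_sc_left ip_sc_right)
  qed
  then show ?thesis
    by blast
qed

lemma adjoint_eqI:
  assumes "\<And>x y. ip (A x) y = ip x (B y)"
  shows "adjoint ip A = B"
  unfolding adjoint_def
proof (rule the_equality)
  fix B'
  assume "\<forall>x y. ip (A x) y = ip x (B' y)"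
  then show "B' = B"
    using assms by (metis ip_eqI ext)
qed (use assms in blast)

lemma adjoint_ip:
  assumes "bounded_op sc ip A"
  shows "ip (A x) y = ip x (adjoint ip A y)"
proof -
  obtain K where K: "\<And>x. hnorm (A x) \<le> K * hnorm x"
    and add: "\<And>x y. A (x + y) = A x + A y" and scale: "\<And>c x. A (sc c x) = sc c (A x)"
    using assms unfolding bounded_op_def by blast
  have "\<exists>z. \<forall>x. ip (A x) y = ip x z" for y
  proof (rule Riesz_representation)
    show "cmod (ip (A x) y) \<le> (K * hnorm y) * hnorm x" for x
    proof -
      have "cmod (ip (A x) y) \<le> hnorm (A x) * hnorm y"
        by (rule Cauchy_Schwarz)
      also have "\<dots> \<le> (K * hnorm x) * hnorm y"
        by (rule mult_right_mono[OF K hnorm_nonneg])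
      finally show ?thesis
        by (simp only: ac_simps)
    qed
  qed (simp_all add: add scale ip_add_left ip_sc_left)
  then obtain B where "\<And>x y. ip (A x) y = ip x (B y)"
    by metis
  then show ?thesis
    using adjoint_eqI by metis
qed

section \<open>Numerical radius\<close>

definition numerical_radius :: "('h \<Rightarrow> 'h) \<Rightarrow> real" where
  "numerical_radius T = Sup (insert 0 {cmod (ip (T x) x) | x. hnorm x = 1})"

lemma numerical_radius_le:
  assumes "0 \<le> c" and "\<And>x. hnorm x = 1 \<Longrightarrow> cmod (ip (T x) x) \<le> c"
  shows "numerical_radius T \<le> c"
  unfolding numerical_radius_def using assms by (intro cSup_least) auto

lemma
  assumes "\<And>x. hnorm x = 1 \<Longrightarrow> cmod (ip (T x) x) \<le> c"
  shows numerical_radius_nonneg: "0 \<le> numerical_radius T"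
    and cmod_ip_le_numerical_radius: "hnorm x = 1 \<Longrightarrow> cmod (ip (T x) x) \<le> numerical_radius T"
proof -
  have "bdd_above (insert 0 {cmod (ip (T x) x) | x. hnorm x = 1})"
    using assms by (intro bdd_aboveI[of _ "max 0 c"]) force
  then show "0 \<le> numerical_radius T" and "hnorm x = 1 \<Longrightarrow> cmod (ip (T x) x) \<le> numerical_radius T"
    unfolding numerical_radius_def by (auto intro: cSup_upper)
qed

lemma numerical_radius_le_mult:
  assumes "0 \<le> M" and "\<And>x. hnorm x = 1 \<Longrightarrow> cmod (ip (T x) x) \<le> M * cmod (ip (S x) x)"
    and "\<And>x. hnorm x = 1 \<Longrightarrow> cmod (ip (S x) x) \<le> c"
  shows "numerical_radius T \<le> M * numerical_radius S"
proof (rule numerical_radius_le)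
  show "0 \<le> M * numerical_radius S"
    using assms(1) numerical_radius_nonneg[OF assms(3)] by simp
  show "cmod (ip (T x) x) \<le> M * numerical_radius S" if "hnorm x = 1" for x
    using assms(2)[OF that] mult_left_mono[OF cmod_ip_le_numerical_radius[OF assms(3) that] assms(1)]
    by linarith
qed

lemma mult_numerical_radius_le:
  assumes "0 \<le> m" and "\<And>x. hnorm x = 1 \<Longrightarrow> m * cmod (ip (S x) x) \<le> cmod (ip (T x) x)"
    and "\<And>x. hnorm x = 1 \<Longrightarrow> cmod (ip (T x) x) \<le> c"
  shows "m * numerical_radius S \<le> numerical_radius T"
proof (cases "m = 0")
  case True
  then show ?thesis
    using numerical_radius_nonneg[OF assms(3)] by simp
next
  case False
  then have "0 < m"
    using assms(1) by simp
  have "numerical_radius S \<le> numerical_radius T / m"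
  proof (rule numerical_radius_le)
    show "0 \<le> numerical_radius T / m"
      using numerical_radius_nonneg[OF assms(3)] \<open>0 < m\<close> by simp
    show "cmod (ip (S x) x) \<le> numerical_radius T / m" if "hnorm x = 1" for x
      using assms(2)[OF that] cmod_ip_le_numerical_radius[OF assms(3) that] \<open>0 < m\<close>
      by (simp add: le_divide_eq mult.commute)
  qed
  then show ?thesis
    using \<open>0 < m\<close> by (simp add: le_divide_eq mult.commute)
qed

lemma op_norm_le:
  assumes "\<And>x. hnorm x \<le> 1 \<Longrightarrow> hnorm (S x) \<le> c"
  shows "op_norm ip S \<le> c"
  unfolding op_norm_def using assms by (intro cSup_least) (auto intro!: exI[of _ 0])

lemma hnorm_le_op_norm:
  assumes "\<And>x. hnorm x \<le> 1 \<Longrightarrow> hnorm (S x) \<le> c" and "hnorm x \<le> 1"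
  shows "hnorm (S x) \<le> op_norm ip S"
  unfolding op_norm_def using assms by (intro cSup_upper bdd_aboveI[of _ c]) auto

lemma hnorm_le_of_Re_ip_le:
  assumes "0 \<le> c" and "B 0 = 0"
    and B: "\<And>x y. Re (ip (B x) y) \<le> c * ((hnorm x)\<^sup>2 + (hnorm y)\<^sup>2)"
  shows "hnorm (B x) \<le> 2 * c * hnorm x"
proof (cases "x = 0 \<or> B x = 0")
  case True
  then show ?thesis
    using assms(1,2) hnorm_nonneg[of x] by auto
next
  case False
  then have x_pos: "0 < hnorm x" and Bx_pos: "0 < hnorm (B x)"
    by (simp_all add: hnorm_pos)
  define r where "r = hnorm x / hnorm (B x)"
  have "hnorm x * hnorm (B x) = Re (ip (B x) (sc (complex_of_real r) (B x)))"
    using Bx_pos by (simp add: r_def ip_sc_right ip_self power2_eq_square)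
  also have "\<dots> \<le> c * ((hnorm x)\<^sup>2 + (hnorm (sc (complex_of_real r) (B x)))\<^sup>2)"
    by (rule B)
  also have "\<dots> = hnorm x * (2 * c * hnorm x)"
    using Bx_pos False by (simp add: r_def hnorm_sc norm_divide power2_eq_square)
  finally show ?thesis
    by (rule mult_left_le_imp_le[OF _ x_pos])
qed

end

locale hilbert_operator = complex_hilbert sc ip
  for sc :: "complex \<Rightarrow> 'h::ab_group_add \<Rightarrow> 'h" and ip +
  fixes A :: "'h \<Rightarrow> 'h"
  assumes bounded_op: "bounded_op sc ip A"
begin

abbreviation adjA :: "'h \<Rightarrow> 'h" where "adjA \<equiv> adjoint ip A"

lemma A_add: "A (x + y) = A x + A y"
  and A_sc: "A (sc c x) = sc c (A x)"
  using bounded_op unfolding bounded_op_def by blast+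

lemma A_zero [simp]: "A 0 = 0"
  using A_add[of 0 0] by simp

lemma A_diff: "A (x - y) = A x - A y"
  by (metis A_add diff_add_cancel eq_diff_eq)

lemma ip_A_adj: "ip (A x) y = ip x (adjA y)"
  using adjoint_ip[OF bounded_op] .

lemma ip_adj_A: "ip (adjA x) y = ip x (A y)"
  by (metis ip_A_adj ip_cnj)

lemma adj_add: "adjA (x + y) = adjA x + adjA y"
  by (rule ip_eqI) (simp add: ip_A_adj[symmetric] ip_add_right)

lemma adj_diff: "adjA (x - y) = adjA x - adjA y"
  by (rule ip_eqI) (simp add: ip_A_adj[symmetric] ip_diff_right)

lemma adj_zero [simp]: "adjA 0 = 0"
  using adj_diff[of 0 0] by simp

lemma numerical_range_bounded:
  obtains c where "\<And>x. hnorm x = 1 \<Longrightarrow> cmod (ip (A x) x) \<le> c"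
proof -
  obtain K where K: "\<And>x. hnorm (A x) \<le> K * hnorm x"
    using bounded_op unfolding bounded_op_def by blast
  show ?thesis
  proof
    show "cmod (ip (A x) x) \<le> K" if "hnorm x = 1" for x
      using Cauchy_Schwarz[of "A x" x] K[of x] that by simp
  qed
qed

lemma numerical_radius_A_nonneg: "0 \<le> numerical_radius A"
  using numerical_range_bounded numerical_radius_nonneg by metis

lemma cmod_ip_le_numerical_radius_hnorm: "cmod (ip (A x) x) \<le> numerical_radius A * (hnorm x)\<^sup>2"
proof (cases "x = 0")
  case False
  define u where "u = sc (complex_of_real (1 / hnorm x)) x"
  obtain c where "\<And>x. hnorm x = 1 \<Longrightarrow> cmod (ip (A x) x) \<le> c"
    using numerical_range_bounded by blast
  then have "cmod (ip (A u) u) \<le> numerical_radius A"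
    using cmod_ip_le_numerical_radius hnorm_normalize[OF False] unfolding u_def by blast
  moreover have "cmod (ip (A u) u) = cmod (ip (A x) x) / (hnorm x)\<^sup>2"
    by (simp add: u_def A_sc ip_sc_left ip_sc_right norm_mult norm_divide power2_eq_square)
  ultimately show ?thesis
    using False by (simp add: pos_divide_le_eq)
qed simp

lemma polarization:
  "ip (A (x + y)) (x + y) - ip (A (x - y)) (x - y) = 2 * (ip (A x) y + ip (A y) x)"
  by (simp add: A_add A_diff ip_linear)

lemma cmod_polarization_le:
  "cmod (ip (A x) y + ip (A y) x) \<le> numerical_radius A * ((hnorm x)\<^sup>2 + (hnorm y)\<^sup>2)"
proof -
  have "2 * cmod (ip (A x) y + ip (A y) x)
      \<le> cmod (ip (A (x + y)) (x + y)) + cmod (ip (A (x - y)) (x - y))"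
    using norm_triangle_ineq4 polarization[of x y] by (metis norm_mult norm_numeral)
  also have "\<dots> \<le> numerical_radius A * ((hnorm (x + y))\<^sup>2 + (hnorm (x - y))\<^sup>2)"
    using cmod_ip_le_numerical_radius_hnorm by (simp add: add_mono distrib_left)
  also have "\<dots> = 2 * (numerical_radius A * ((hnorm x)\<^sup>2 + (hnorm y)\<^sup>2))"
    unfolding parallelogram by (simp add: algebra_simps)
  finally show ?thesis
    by simp
qed

lemma hnorm_real_part_le: "hnorm (A x + adjA x) \<le> 2 * numerical_radius A * hnorm x"
proof (rule hnorm_le_of_Re_ip_le[OF numerical_radius_A_nonneg])
  show "Re (ip (A x + adjA x) y) \<le> numerical_radius A * ((hnorm x)\<^sup>2 + (hnorm y)\<^sup>2)" for x y
  proof -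
    have "Re (ip (A x + adjA x) y) = Re (ip (A x) y + ip (A y) x)"
      by (simp add: ip_add_left ip_adj_A Re_ip_commute[of x])
    then show ?thesis
      using complex_Re_le_cmod cmod_polarization_le order_trans by metis
  qed
qed simp

lemma hnorm_imaginary_part_le: "hnorm (A x - adjA x) \<le> 2 * numerical_radius A * hnorm x"
proof -
  have "hnorm (sc \<i> (A x - adjA x)) \<le> 2 * numerical_radius A * hnorm x"
  proof (rule hnorm_le_of_Re_ip_le[OF numerical_radius_A_nonneg])
    show "Re (ip (sc \<i> (A x - adjA x)) y) \<le> numerical_radius A * ((hnorm x)\<^sup>2 + (hnorm y)\<^sup>2)"
      for x y
    proof -
      have "Re (ip (sc \<i> (A x - adjA x)) y) = - Im (ip (A x) y + ip (A y) x)"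
        using ip_cnj[of x "A y"] by (simp add: ip_sc_left ip_diff_left ip_adj_A)
      then show ?thesis
        using abs_Im_le_cmod[of "ip (A x) y + ip (A y) x"] cmod_polarization_le[of x y] by linarith
    qed
  qed simp
  then show ?thesis
    by (simp add: hnorm_sc)
qed

lemma hnorm_sum_products_le:
  "hnorm (adjA (A x) + A (adjA x)) \<le> 4 * (numerical_radius A)\<^sup>2 * hnorm x"
proof -
  let ?P = "\<lambda>x. A x + adjA x" and ?Q = "\<lambda>x. A x - adjA x"
  have "sc 2 (adjA (A x) + A (adjA x)) = ?P (?P x) - ?Q (?Q x)"
    by (simp add: sc_two A_add A_diff adj_add adj_diff algebra_simps)
  then have "2 * hnorm (adjA (A x) + A (adjA x)) \<le> hnorm (?P (?P x)) + hnorm (?Q (?Q x))"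
    using hnorm_triangle_diff by (metis hnorm_sc norm_numeral)
  also have "\<dots> \<le> 2 * numerical_radius A * hnorm (?P x) + 2 * numerical_radius A * hnorm (?Q x)"
    by (intro add_mono hnorm_real_part_le hnorm_imaginary_part_le)
  also have "\<dots> \<le> 2 * numerical_radius A * (2 * numerical_radius A * hnorm x)
      + 2 * numerical_radius A * (2 * numerical_radius A * hnorm x)"
    using numerical_radius_A_nonneg
    by (intro add_mono mult_left_mono hnorm_real_part_le hnorm_imaginary_part_le) simp_all
  also have "\<dots> = 2 * (4 * (numerical_radius A)\<^sup>2 * hnorm x)"
    by (simp add: power2_eq_square algebra_simps)
  finally show ?thesis
    by linarith
qed

lemma hnorm_sum_products_le_ball:
  assumes "hnorm x \<le> 1"
  shows "hnorm (adjA (A x) + A (adjA x)) \<le> 4 * (numerical_radius A)\<^sup>2"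
  using order_trans[OF hnorm_sum_products_le mult_left_le[OF assms]] by simp

lemma op_norm_sum_products_le:
  "op_norm ip (\<lambda>x. adjA (A x) + A (adjA x)) \<le> 4 * (numerical_radius A)\<^sup>2"
  by (intro op_norm_le hnorm_sum_products_le_ball)

lemma ip_sum_products_self:
  "ip (adjA (A x) + A (adjA x)) x = complex_of_real ((hnorm (A x))\<^sup>2 + (hnorm (adjA x))\<^sup>2)"
  by (simp add: ip_add_left ip_adj_A ip_A_adj ip_self)

lemma numerical_radius_sq_le:
  "(numerical_radius A)\<^sup>2 \<le> op_norm ip (\<lambda>x. adjA (A x) + A (adjA x)) / 2"
proof -
  let ?N = "op_norm ip (\<lambda>x. adjA (A x) + A (adjA x))"
  have le_N: "hnorm (adjA (A x) + A (adjA x)) \<le> ?N" if "hnorm x \<le> 1" for x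
    using hnorm_sum_products_le_ball that by (rule hnorm_le_op_norm)
  have "(cmod (ip (A x) x))\<^sup>2 \<le> ?N / 2" if "hnorm x = 1" for x
  proof -
    define w where "w = ip (A x) x"
    have "ip (A x + adjA x) x = complex_of_real (2 * Re w)"
      and "ip (A x - adjA x) x = \<i> * complex_of_real (2 * Im w)"
      using ip_cnj[of x "A x"] by (simp_all add: w_def ip_add_left ip_diff_left ip_adj_A complex_eq_iff)
    then have "\<bar>2 * Re w\<bar> \<le> hnorm (A x + adjA x)" and "\<bar>2 * Im w\<bar> \<le> hnorm (A x - adjA x)"
      using Cauchy_Schwarz[of "A x + adjA x" x] Cauchy_Schwarz[of "A x - adjA x" x] that
      by (simp_all add: norm_mult)
    then have "(2 * Re w)\<^sup>2 \<le> (hnorm (A x + adjA x))\<^sup>2" and "(2 * Im w)\<^sup>2 \<le> (hnorm (A x - adjA x))\<^sup>2"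
      using power_mono[OF _ abs_ge_zero, of _ _ 2] by (metis power2_abs)+
    then have "4 * (cmod w)\<^sup>2 \<le> (hnorm (A x + adjA x))\<^sup>2 + (hnorm (A x - adjA x))\<^sup>2"
      by (simp add: cmod_power2 power_mult_distrib)
    also have "\<dots> = 2 * Re (ip (adjA (A x) + A (adjA x)) x)"
      by (simp add: parallelogram ip_sum_products_self)
    also have "\<dots> \<le> 2 * ?N"
      using order_trans[OF complex_Re_le_cmod Cauchy_Schwarz, of "adjA (A x) + A (adjA x)" x]
        le_N[of x] that by simp
    finally show ?thesis
      by (simp add: w_def)
  qed
  moreover have "0 \<le> ?N"
    using order_trans[OF hnorm_nonneg le_N[of 0]] by simp
  ultimately have "numerical_radius A \<le> sqrt (?N / 2)"
    by (intro numerical_radius_le) (auto intro: real_le_rsqrt)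
  then have "(numerical_radius A)\<^sup>2 \<le> (sqrt (?N / 2))\<^sup>2"
    using numerical_radius_A_nonneg by (rule power_mono)
  then show ?thesis
    using \<open>0 \<le> ?N\<close> by simp
qed

lemma numerical_radius_combination_bounds:
  fixes a b :: real
  defines "T \<equiv> \<lambda>x. sc (complex_of_real a) (A x) + sc (complex_of_real b) (adjA x)"
  shows "min \<bar>a + b\<bar> \<bar>a - b\<bar> * numerical_radius A \<le> numerical_radius T"
    and "numerical_radius T \<le> max \<bar>a + b\<bar> \<bar>a - b\<bar> * numerical_radius A"
proof -
  have ip_T: "ip (T x) x = of_real a * ip (A x) x + of_real b * cnj (ip (A x) x)" for x
    using ip_cnj[of x "A x"] by (simp add: T_def ip_add_left ip_sc_left ip_adj_A)
  obtain c where c: "\<And>x. hnorm x = 1 \<Longrightarrow> cmod (ip (A x) x) \<le> c"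
    using numerical_range_bounded by blast
  have T_le: "cmod (ip (T x) x) \<le> max \<bar>a + b\<bar> \<bar>a - b\<bar> * cmod (ip (A x) x)" for x
    unfolding ip_T by (rule cmod_combination_cnj_bounds(2))
  show "numerical_radius T \<le> max \<bar>a + b\<bar> \<bar>a - b\<bar> * numerical_radius A"
    using T_le c by (intro numerical_radius_le_mult) auto
  show "min \<bar>a + b\<bar> \<bar>a - b\<bar> * numerical_radius A \<le> numerical_radius T"
  proof (rule mult_numerical_radius_le)
    show "min \<bar>a + b\<bar> \<bar>a - b\<bar> * cmod (ip (A x) x) \<le> cmod (ip (T x) x)" for x
      unfolding ip_T by (rule cmod_combination_cnj_bounds(1))
    show "cmod (ip (T x) x) \<le> max \<bar>a + b\<bar> \<bar>a - b\<bar> * c" if "hnorm x = 1" for x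
      using order_trans[OF T_le mult_left_mono[OF c[OF that]]] by simp
  qed simp
qed

end

theorem corollary4p2:
  fixes sc :: "complex \<Rightarrow> 'h::ab_group_add \<Rightarrow> 'h"
    and ip :: "'h \<Rightarrow> 'h \<Rightarrow> complex"
    and \<phi> \<psi> :: "real \<Rightarrow> real"
    and A :: "'h \<Rightarrow> 'h"
    and t :: real
  assumes "complex_hilbert_space sc ip"
    and "continuous_on {0..1} \<phi>" and "continuous_on {0..1} \<psi>"
    and "bounded_op sc ip A"
    and "t \<in> {0..1}"
  shows "(1/4) * (min \<bar>\<phi> t + \<psi> t\<bar> \<bar>\<phi> t - \<psi> t\<bar>)\<^sup>2
           * op_norm ip (\<lambda>x. adjoint ip A (A x) + A (adjoint ip A x))
         \<le> (omega_t sc ip \<phi> \<psi> A t)\<^sup>2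
       \<and> (omega_t sc ip \<phi> \<psi> A t)\<^sup>2
         \<le> (1/2) * (max \<bar>\<phi> t + \<psi> t\<bar> \<bar>\<phi> t - \<psi> t\<bar>)\<^sup>2
           * op_norm ip (\<lambda>x. adjoint ip A (A x) + A (adjoint ip A x))"
proof -
  interpret hilbert_operator sc ip A
    using complex_hilbertI[OF assms(1)] assms(4)
    by (intro hilbert_operator.intro hilbert_operator_axioms.intro)
  define m where "m = min \<bar>\<phi> t + \<psi> t\<bar> \<bar>\<phi> t - \<psi> t\<bar>"
  define M where "M = max \<bar>\<phi> t + \<psi> t\<bar> \<bar>\<phi> t - \<psi> t\<bar>"
  define N where "N = op_norm ip (\<lambda>x. adjA (A x) + A (adjA x))"
  have "omega_t sc ip \<phi> \<psi> A t
      = numerical_radius (\<lambda>x. sc (complex_of_real (\<phi> t)) (A x) + sc (complex_of_real (\<psi> t)) (adjA x))"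
    unfolding omega_t_def numerical_radius_def ..
  note combination = numerical_radius_combination_bounds[of "\<phi> t" "\<psi> t", folded this m_def M_def]
  have "0 \<le> m * numerical_radius A"
    using numerical_radius_A_nonneg by (simp add: m_def)
  have "(1/4) * m\<^sup>2 * N \<le> (m * numerical_radius A)\<^sup>2"
    using mult_left_mono[OF op_norm_sum_products_le, of "m\<^sup>2"] by (simp add: N_def power_mult_distrib)
  also have "\<dots> \<le> (omega_t sc ip \<phi> \<psi> A t)\<^sup>2"
    using combination(1) \<open>0 \<le> m * numerical_radius A\<close> by (rule power_mono)
  finally have lower: "(1/4) * m\<^sup>2 * N \<le> (omega_t sc ip \<phi> \<psi> A t)\<^sup>2" .
  have "(omega_t sc ip \<phi> \<psi> A t)\<^sup>2 \<le> (M * numerical_radius A)\<^sup>2"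
    using combination(2) order.trans[OF \<open>0 \<le> m * numerical_radius A\<close> combination(1)]
    by (rule power_mono)
  also have "\<dots> \<le> (1/2) * M\<^sup>2 * N"
    using mult_left_mono[OF numerical_radius_sq_le, of "M\<^sup>2"] by (simp add: N_def power_mult_distrib)
  finally show ?thesis
    using lower by (simp add: m_def M_def N_def)
qed

end
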